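(* Let $m\ge 2$ and $1\le\ell<m$. For the Borda rule (scoring function $\alpha_i=m-i$), the optimal truncated-ballot algorithm applied to $\ell$-truncated elections is an approximation algorithm with approximation ratio $\frac{\ell}{m+\frac{\ell}{m-1}\cdot\ell}$: for every election $E$, the returned candidate $w$ satisfies $\mathrm{sc}_\lambda(w)\ge\frac{\ell}{m+\ell^2/(m-1)}\max_{c\in C}\mathrm{sc}_\lambda(c)$.
   Context: An election consists of a set $V$ of $n$ voters and a set $C$ of $m$ candidates; each voter $v$ has a strict linear order over $C$, and $\mathrm{pos}_v(c)$ is the position of $c$ (1 = top). For scoring function $\lambda(i)=\alpha_i$, $\mathrm{sc}_\lambda(c)=\sum_{v}\lambda(\mathrm{pos}_v(c))$. The $\ell$-truncation reveals for each voter only her top $\ell$ candidates in order. Let $\mathrm{occ}(c)$ be the number of voters ranking $c$ among their top $\ell$ and $T(c)=\sum_{v:\,\mathrm{pos}_v(c)\le\ell}\alpha_{\mathrm{pos}_v(c)}$; $\mathrm{worst}(c)=T(c)+(n-\mathrm{occ}(c))\alpha_m$, $\mathrm{best}(c)=T(c)+(n-\mathrm{occ}(c))\alpha_{\ell+1}$. Optimal truncated-ballot algorithm: let $a$ maximize $\mathrm{worst}$, $b_1$ maximize $\mathrm{best}$, and $b_2$ maximize $\mathrm{best}$ over $C\setminus\{b_1\}$; return $a$ if $\mathrm{worst}(a)/\mathrm{best}(b_1)\ge\mathrm{worst}(b_1)/\mathrm{best}(b_2)$, else $b_1$. *)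

theory Defs
  imports Complex_Main
begin

text \<open>An election: finite set V of voters, finite set C of m candidates; each voter v
  has a strict linear order over C, represented by its position function
  pos v :: candidate => nat, a bijection from C onto {1..m} (1 = top).\<close>
definition election :: "'v set \<Rightarrow> 'c set \<Rightarrow> nat \<Rightarrow> ('v \<Rightarrow> 'c \<Rightarrow> nat) \<Rightarrow> bool" where
  "election V C m pos \<longleftrightarrow> finite V \<and> finite C \<and> card C = m \<and>
     (\<forall>v\<in>V. bij_betw (pos v) C {1..m})"

definition score :: "(nat \<Rightarrow> real) \<Rightarrow> 'v set \<Rightarrow> ('v \<Rightarrow> 'c \<Rightarrow> nat) \<Rightarrow> 'c \<Rightarrow> real" where
  "score alpha V pos c = (\<Sum>v\<in>V. alpha (pos v c))"

definition borda :: "nat \<Rightarrow> nat \<Rightarrow> real" where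
  "borda m i = real m - real i"

definition occ :: "nat \<Rightarrow> 'v set \<Rightarrow> ('v \<Rightarrow> 'c \<Rightarrow> nat) \<Rightarrow> 'c \<Rightarrow> nat" where
  "occ l V pos c = card {v\<in>V. pos v c \<le> l}"

definition Tsc :: "(nat \<Rightarrow> real) \<Rightarrow> nat \<Rightarrow> 'v set \<Rightarrow> ('v \<Rightarrow> 'c \<Rightarrow> nat) \<Rightarrow> 'c \<Rightarrow> real" where
  "Tsc alpha l V pos c = (\<Sum>v\<in>{v\<in>V. pos v c \<le> l}. alpha (pos v c))"

definition worst :: "(nat \<Rightarrow> real) \<Rightarrow> nat \<Rightarrow> nat \<Rightarrow> 'v set \<Rightarrow> ('v \<Rightarrow> 'c \<Rightarrow> nat) \<Rightarrow> 'c \<Rightarrow> real" where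
  "worst alpha m l V pos c =
     Tsc alpha l V pos c + real (card V - occ l V pos c) * alpha m"

definition best :: "(nat \<Rightarrow> real) \<Rightarrow> nat \<Rightarrow> 'v set \<Rightarrow> ('v \<Rightarrow> 'c \<Rightarrow> nat) \<Rightarrow> 'c \<Rightarrow> real" where
  "best alpha l V pos c =
     Tsc alpha l V pos c + real (card V - occ l V pos c) * alpha (l + 1)"

end

theory Submission
  imports Defs
begin

text \<open>Write T for the truncated score and R for the claimed ratio. For an antitone scoring function
  worst \<le> score \<le> best. Every voter fills exactly the positions 1..l, so the T-values sum to
  n(\<alpha> 1 + \<dots> + \<alpha> l); for Borda (where worst = T, as \<alpha> m = 0) this gives m T(a) \<ge> n l (m - l)
  for the worst-case leader a. Together with T \<le> (m - 1) occ, which bounds best(b1) through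
  T(b1) \<le> T(a), this yields R best(b1) \<le> worst(a). Returning a is then good enough, and so is
  returning b1: either b1 is the true winner, or the true winner is dominated by b2 and the rule
  chose b1 only because worst(b1)/best(b2) > worst(a)/best(b1) \<ge> R.\<close>

lemma ratio_rule_approximates_Max:
  fixes lo sc hi :: "'c \<Rightarrow> real"
  assumes "finite C"
    and lo_le_sc: "\<And>c. c \<in> C \<Longrightarrow> lo c \<le> sc c"
    and sc_le_hi: "\<And>c. c \<in> C \<Longrightarrow> sc c \<le> hi c"
    and sc_nonneg: "\<And>c. c \<in> C \<Longrightarrow> 0 \<le> sc c"
    and a: "a \<in> C"
    and b1: "b1 \<in> C" "\<forall>c\<in>C. hi c \<le> hi b1"
    and b2: "b2 \<in> C - {b1}" "\<forall>c\<in>C - {b1}. hi c \<le> hi b2"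
    and R: "0 \<le> R" "R \<le> 1" "R * hi b1 \<le> lo a"
  shows "R * Max (sc ` C) \<le> sc (if lo b1 / hi b2 \<le> lo a / hi b1 then a else b1)"
proof -
  obtain c0 where c0: "c0 \<in> C" and Max_eq: "Max (sc ` C) = sc c0"
    using Max_in[of "sc ` C"] \<open>finite C\<close> a by fastforce
  have "R * sc c0 \<le> R * hi b1"
    using sc_le_hi[OF c0] b1(2) c0 \<open>0 \<le> R\<close> by (meson mult_left_mono order_trans)
  show ?thesis
  proof (cases "lo b1 / hi b2 \<le> lo a / hi b1")
    case True
    then show ?thesis
      using \<open>R * sc c0 \<le> R * hi b1\<close> R(3) lo_le_sc[OF a] Max_eq by simp
  next
    case prefer_b1: False
    consider "c0 = b1" | "hi b1 \<le> 0" | "c0 \<noteq> b1" "hi b1 > 0" by fastforce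
    then show ?thesis
    proof cases
      case 1
      then show ?thesis
        using prefer_b1 Max_eq mult_right_mono[OF R(2) sc_nonneg[OF b1(1)]] by simp
    next
      case 2
      then have "R * sc c0 \<le> 0"
        using \<open>R * sc c0 \<le> R * hi b1\<close> \<open>0 \<le> R\<close> by (meson mult_nonneg_nonpos order_trans)
      then show ?thesis using prefer_b1 Max_eq sc_nonneg[OF b1(1)] by simp
    next
      case 3
      have "R \<le> lo a / hi b1" using R(3) 3(2) by (simp add: pos_le_divide_eq mult.commute)
      then have ratio_b1: "R < lo b1 / hi b2" using prefer_b1 by simp
      have "0 \<le> hi b2" using sc_nonneg sc_le_hi b2(1) by (meson DiffD1 order_trans)
      with ratio_b1 \<open>0 \<le> R\<close> have "hi b2 > 0" by (cases "hi b2 = 0") auto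
      with ratio_b1 have "R * hi b2 < lo b1" by (simp add: less_divide_eq mult.commute)
      moreover have "R * sc c0 \<le> R * hi b2"
        using sc_le_hi[OF c0] b2(2) c0 3(1) \<open>0 \<le> R\<close> by (meson DiffI singletonD mult_left_mono order_trans)
      ultimately show ?thesis using prefer_b1 Max_eq lo_le_sc[OF b1(1)] by simp
    qed
  qed
qed

lemma election_pos_bounds:
  assumes "election V C m pos" "v \<in> V" "c \<in> C"
  shows "1 \<le> pos v c" "pos v c \<le> m"
  using bij_betw_apply[of "pos v" C "{1..m}" c] assms unfolding election_def by auto

lemma election_top_positions_bij:
  assumes e: "election V C m pos" and "v \<in> V" "l \<le> m"
  shows "bij_betw (pos v) {c\<in>C. pos v c \<le> l} {1..l}"
proof -
  have bij: "bij_betw (pos v) C {1..m}" using e \<open>v \<in> V\<close> unfolding election_def by simp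
  have "pos v ` {c\<in>C. pos v c \<le> l} = {1..l}"
    using bij_betw_imp_surj_on[OF bij] \<open>l \<le> m\<close> by (force simp: image_iff)
  then show ?thesis by (intro bij_betw_subset[OF bij]) auto
qed

lemma sum_Tsc_eq:
  assumes e: "election V C m pos" and "l \<le> m"
  shows "(\<Sum>c\<in>C. Tsc \<alpha> l V pos c) = real (card V) * (\<Sum>i=1..l. \<alpha> i)"
proof -
  have fin: "finite V" "finite C" using e unfolding election_def by simp_all
  have "(\<Sum>c\<in>C. Tsc \<alpha> l V pos c) = (\<Sum>c\<in>C. \<Sum>v\<in>V. if pos v c \<le> l then \<alpha> (pos v c) else 0)"
    unfolding Tsc_def using fin by (simp add: sum.inter_filter)
  also have "\<dots> = (\<Sum>v\<in>V. \<Sum>c\<in>C. if pos v c \<le> l then \<alpha> (pos v c) else 0)"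
    by (rule sum.swap)
  also have "\<dots> = (\<Sum>v\<in>V. \<Sum>c\<in>{c\<in>C. pos v c \<le> l}. \<alpha> (pos v c))"
    using fin by (simp add: sum.inter_filter)
  also have "\<dots> = (\<Sum>v\<in>V. \<Sum>i=1..l. \<alpha> i)"
    using sum.reindex_bij_betw[OF election_top_positions_bij[OF e _ \<open>l \<le> m\<close>]]
    by (intro sum.cong) blast+
  finally show ?thesis by simp
qed

lemma score_eq_Tsc_plus_unranked:
  assumes "election V C m pos"
  shows "score \<alpha> V pos c = Tsc \<alpha> l V pos c + (\<Sum>v\<in>{v\<in>V. \<not> pos v c \<le> l}. \<alpha> (pos v c))"
proof -
  have "finite V" using assms unfolding election_def by simp
  then show ?thesis
    unfolding score_def Tsc_def using sum.Int_Diff[of V _ "{v. pos v c \<le> l}"]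
    by (simp add: Int_def set_diff_eq)
qed

lemma card_unranked:
  assumes "election V C m pos"
  shows "card {v\<in>V. \<not> pos v c \<le> l} = card V - occ l V pos c"
proof -
  have "{v\<in>V. \<not> pos v c \<le> l} = V - {v\<in>V. pos v c \<le> l}" by auto
  moreover have "finite V" using assms unfolding election_def by simp
  ultimately show ?thesis unfolding occ_def by (simp add: card_Diff_subset)
qed

lemma worst_le_score:
  assumes e: "election V C m pos" and "antimono \<alpha>" and c: "c \<in> C"
  shows "worst \<alpha> m l V pos c \<le> score \<alpha> V pos c"
proof -
  have "(\<Sum>v\<in>{v\<in>V. \<not> pos v c \<le> l}. \<alpha> m) \<le> (\<Sum>v\<in>{v\<in>V. \<not> pos v c \<le> l}. \<alpha> (pos v c))"
    using election_pos_bounds(2)[OF e _ c] \<open>antimono \<alpha>\<close> by (intro sum_mono) (auto dest: antimonoD)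
  then show ?thesis
    unfolding worst_def score_eq_Tsc_plus_unranked[OF e, of _ _ l] by (simp add: card_unranked[OF e])
qed

lemma score_le_best:
  assumes e: "election V C m pos" and "antimono \<alpha>"
  shows "score \<alpha> V pos c \<le> best \<alpha> l V pos c"
proof -
  have "(\<Sum>v\<in>{v\<in>V. \<not> pos v c \<le> l}. \<alpha> (pos v c)) \<le> (\<Sum>v\<in>{v\<in>V. \<not> pos v c \<le> l}. \<alpha> (l + 1))"
    using \<open>antimono \<alpha>\<close> by (intro sum_mono) (simp add: antimonoD)
  then show ?thesis
    unfolding best_def score_eq_Tsc_plus_unranked[OF e, of _ _ l] by (simp add: card_unranked[OF e])
qed

lemma score_nonneg:
  assumes e: "election V C m pos" and "antimono \<alpha>" "0 \<le> \<alpha> m" and c: "c \<in> C"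
  shows "0 \<le> score \<alpha> V pos c"
  unfolding score_def
proof (intro sum_nonneg)
  fix v assume "v \<in> V"
  then have "\<alpha> m \<le> \<alpha> (pos v c)"
    using antimonoD[OF \<open>antimono \<alpha>\<close> election_pos_bounds(2)[OF e _ c]] by simp
  with \<open>0 \<le> \<alpha> m\<close> show "0 \<le> \<alpha> (pos v c)" by simp
qed

lemma Tsc_le_occ:
  assumes e: "election V C m pos" and "antimono \<alpha>" and c: "c \<in> C"
  shows "Tsc \<alpha> l V pos c \<le> real (occ l V pos c) * \<alpha> 1"
proof -
  have "Tsc \<alpha> l V pos c \<le> (\<Sum>v\<in>{v\<in>V. pos v c \<le> l}. \<alpha> 1)"
    unfolding Tsc_def using election_pos_bounds(1)[OF e _ c] \<open>antimono \<alpha>\<close>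
    by (intro sum_mono) (auto dest: antimonoD)
  then show ?thesis unfolding occ_def by simp
qed

text \<open>Multiplying by \<alpha> 1 lets the unknown occ(c) be traded for T(c) via Tsc_le_occ.\<close>
lemma best_mult_top_le:
  assumes e: "election V C m pos" and "antimono \<alpha>" "0 \<le> \<alpha> (l + 1)" and c: "c \<in> C"
  shows "\<alpha> 1 * best \<alpha> l V pos c
    \<le> (\<alpha> 1 - \<alpha> (l + 1)) * Tsc \<alpha> l V pos c + \<alpha> 1 * real (card V) * \<alpha> (l + 1)"
proof -
  have "occ l V pos c \<le> card V"
    using e unfolding election_def occ_def by (intro card_mono) auto
  then have "\<alpha> 1 * best \<alpha> l V pos c = \<alpha> 1 * Tsc \<alpha> l V pos c + \<alpha> 1 * real (card V) * \<alpha> (l + 1)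
      - real (occ l V pos c) * \<alpha> 1 * \<alpha> (l + 1)"
    unfolding best_def by (simp add: of_nat_diff algebra_simps)
  moreover have "Tsc \<alpha> l V pos c * \<alpha> (l + 1) \<le> real (occ l V pos c) * \<alpha> 1 * \<alpha> (l + 1)"
    using Tsc_le_occ[OF e \<open>antimono \<alpha>\<close> c] \<open>0 \<le> \<alpha> (l + 1)\<close> by (rule mult_right_mono)
  ultimately show ?thesis by (simp add: algebra_simps)
qed

lemma antimono_borda: "antimono (borda m)"
  by (rule antimonoI) (simp add: borda_def)

lemma worst_borda_eq_Tsc: "worst (borda m) m l V pos c = Tsc (borda m) l V pos c"
  unfolding worst_def borda_def by simp

lemma sum_borda_top_ge: "real l * (real m - real l) \<le> (\<Sum>i=1..l. borda m i)"
proof -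
  have "(\<Sum>i=1..l. real m - real l) \<le> (\<Sum>i=1..l. borda m i)"
    by (intro sum_mono) (simp add: borda_def)
  then show ?thesis by simp
qed

lemma borda_ratio_arith:
  fixes B Ta Tb n m l :: real
  assumes "1 < m" "0 \<le> l" "l < m" "0 \<le> n"
    and best_bound: "(m - 1) * B \<le> l * Tb + (m - 1) * n * (m - l - 1)"
    and "Tb \<le> Ta"
    and sum_bound: "n * l * (m - l) \<le> m * Ta"
  shows "l / (m + l\<^sup>2 / (m - 1)) * B \<le> Ta"
proof -
  have "n * l * (m - l - 1) \<le> m * Ta"
    using sum_bound mult_left_mono[of "m - l - 1" "m - l" "n * l"] \<open>0 \<le> n\<close> \<open>0 \<le> l\<close> by simp
  then have "(m - 1) * (l * (n * (m - l - 1))) \<le> (m - 1) * (m * Ta)"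
    using \<open>1 < m\<close> by (intro mult_left_mono) (simp_all add: algebra_simps)
  moreover have "l * ((m - 1) * B) \<le> l * (l * Tb + (m - 1) * n * (m - l - 1))"
    using best_bound \<open>0 \<le> l\<close> by (rule mult_left_mono)
  moreover have "l * (l * Tb) \<le> l * (l * Ta)"
    using \<open>Tb \<le> Ta\<close> \<open>0 \<le> l\<close> by (simp add: mult_left_mono)
  ultimately have "l * (m - 1) * B \<le> Ta * (m * (m - 1) + l\<^sup>2)"
    by (simp add: algebra_simps power2_eq_square)
  moreover have "l / (m + l\<^sup>2 / (m - 1)) = l * (m - 1) / (m * (m - 1) + l\<^sup>2)"
    using \<open>1 < m\<close> by (simp add: field_simps)
  moreover have "0 < m * (m - 1) + l\<^sup>2" using \<open>1 < m\<close> by (simp add: add_pos_nonneg)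
  ultimately show ?thesis by (simp add: pos_divide_le_eq mult.commute)
qed

lemma borda_worst_winner_bound:
  assumes e: "election V C m pos" and "2 \<le> m" "l < m"
    and a: "a \<in> C" "\<forall>c\<in>C. worst (borda m) m l V pos c \<le> worst (borda m) m l V pos a"
    and b: "b \<in> C"
  shows "real l / (real m + real l ^ 2 / (real m - 1)) * best (borda m) l V pos b
    \<le> worst (borda m) m l V pos a"
proof -
  have T_max: "\<forall>c\<in>C. Tsc (borda m) l V pos c \<le> Tsc (borda m) l V pos a"
    using a(2) by (simp add: worst_borda_eq_Tsc)
  have "card C = m" using e unfolding election_def by simp
  then have "(\<Sum>c\<in>C. Tsc (borda m) l V pos c) \<le> real m * Tsc (borda m) l V pos a"
    using sum_mono[of C _ "\<lambda>_. Tsc (borda m) l V pos a"] T_max by simp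
  then have "real (card V) * real l * (real m - real l) \<le> real m * Tsc (borda m) l V pos a"
    using sum_Tsc_eq[OF e, of l "borda m"] \<open>l < m\<close>
      mult_left_mono[OF sum_borda_top_ge[of l m], of "real (card V)"] by simp
  moreover have "(real m - 1) * best (borda m) l V pos b
      \<le> real l * Tsc (borda m) l V pos b + (real m - 1) * real (card V) * (real m - real l - 1)"
    using best_mult_top_le[where l = l, OF e antimono_borda[of m] _ b] \<open>l < m\<close> by (simp add: borda_def algebra_simps)
  ultimately show ?thesis
    unfolding worst_borda_eq_Tsc using T_max b \<open>2 \<le> m\<close> \<open>l < m\<close>
    by (intro borda_ratio_arith[where Tb = "Tsc (borda m) l V pos b"]) auto
qed

theorem corollary6:
  fixes V :: "'v set" and C :: "'c set" and pos :: "'v \<Rightarrow> 'c \<Rightarrow> nat"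
    and m l :: nat and a b1 b2 w :: 'c
  assumes elec: "election V C m pos"
    and m2: "2 \<le> m" and l1: "1 \<le> l" and lm: "l < m"
    and a: "a \<in> C" "\<forall>c\<in>C. worst (borda m) m l V pos c \<le> worst (borda m) m l V pos a"
    and b1: "b1 \<in> C" "\<forall>c\<in>C. best (borda m) l V pos c \<le> best (borda m) l V pos b1"
    and b2: "b2 \<in> C - {b1}"
            "\<forall>c\<in>C - {b1}. best (borda m) l V pos c \<le> best (borda m) l V pos b2"
    and w: "w = (if worst (borda m) m l V pos a / best (borda m) l V pos b1
                    \<ge> worst (borda m) m l V pos b1 / best (borda m) l V pos b2
                 then a else b1)"
  shows "score (borda m) V pos w \<ge>
           real l / (real m + real l ^ 2 / (real m - 1)) * Max (score (borda m) V pos ` C)"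
proof -
  have "finite C" using elec unfolding election_def by simp
  have "real l / (real m + real l ^ 2 / (real m - 1)) \<le> real l / real m"
    using m2 by (intro divide_left_mono mult_pos_pos add_pos_nonneg) auto
  also have "\<dots> \<le> 1" using lm by simp
  finally have "real l / (real m + real l ^ 2 / (real m - 1)) \<le> 1" .
  moreover have "0 \<le> real l / (real m + real l ^ 2 / (real m - 1))"
    using m2 by (intro divide_nonneg_nonneg add_nonneg_nonneg) auto
  ultimately show ?thesis
    unfolding w
    by (intro ratio_rule_approximates_Max[OF \<open>finite C\<close> _ _ _ a(1) b1 b2]
        worst_le_score[OF elec antimono_borda] score_le_best[OF elec antimono_borda]
        score_nonneg[OF elec antimono_borda] borda_worst_winner_bound[OF elec m2 lm a b1(1)])
      (simp_all add: borda_def)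
qed

end
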